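(* Suppose the central subspace of $Y$ given $X$ exists, with dimension $d^*_{\rm CS}$ and basis matrix $B\in\mathbb{R}^{p\times d^*_{\rm CS}}$, and take $R^*=B^\top X$. Under the negative log-likelihood loss $\ell(y,g(\cdot\mid r))=-\log g(y\mid r)$ over the class $\mathcal{G}$ of conditional densities, $d^*(\mathcal{L})=d^*_{\rm CS}$.
   Context: $X\in\mathbb{R}^p$, $Y\in\mathcal{Y}\subseteq\mathbb{R}$ with conditional densities of $Y$ given any function of $X$ existing, and all expected negative log-likelihoods below finite. A subspace $\mathcal{S}$ is a dimension-reduction subspace if $Y\perp\!\!\!\perp X\mid P_{\mathcal{S}}X$; the central subspace is the intersection of all such subspaces, assumed itself to be one; $d^*_{\rm CS}$ is its dimension. $R^*=B^\top X$ is zero-padded to $R\in\mathbb{R}^{d_{\max}}$. $\mathcal{G}=\{g:\mathbb{R}^{d_{\max}}\to L^1(\mathcal{Y})\ :\ g(\cdot\mid r)\ge0,\ \int_{\mathcal{Y}}g(y\mid r)\,dy=1\}$ (measurable in $r$); $\mathcal{G}_d=\{g\in\mathcal{G}:g(\cdot\mid r)=g(\cdot\mid r')\text{ whenever } r_{[d]}=r'_{[d]}\}$; $\mathcal{L}_d=\min_{g\in\mathcal{G}_d}\mathbb{E}\{-\log g(Y\mid R)\}$; $d^*(\mathcal{L})=\min\{0\le d\le d_{\max}:\mathcal{L}_d=\mathcal{L}_{d_{\max}}\}$. *)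

theory Defs
  imports "HOL-Probability.Probability"
begin

definition gen_alg :: "'a measure \<Rightarrow> ('a \<Rightarrow> 'd::topological_space) \<Rightarrow> 'a measure" where
  "gen_alg M Z = vimage_algebra (space M) Z borel"

definition cond_indep ::
  "'a measure \<Rightarrow> ('a \<Rightarrow> 'b::topological_space) \<Rightarrow> ('a \<Rightarrow> 'c::topological_space)
     \<Rightarrow> ('a \<Rightarrow> 'd::topological_space) \<Rightarrow> bool" where
  "cond_indep M Y X Z \<longleftrightarrow>
     (\<forall>A \<in> sets borel. \<forall>B \<in> sets borel.
        AE \<omega> in M.
          real_cond_exp M (gen_alg M Z) (\<lambda>\<omega>. indicator A (Y \<omega>) * indicator B (X \<omega>)) \<omega>
          = real_cond_exp M (gen_alg M Z) (\<lambda>\<omega>. indicator A (Y \<omega>)) \<omega>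
            * real_cond_exp M (gen_alg M Z) (\<lambda>\<omega>. indicator B (X \<omega>)) \<omega>)"

definition oproj :: "(real^'p) set \<Rightarrow> real^'p \<Rightarrow> real^'p" where
  "oproj S x = (THE y. y \<in> S \<and> (\<forall>s \<in> S. inner (x - y) s = 0))"

definition dim_red_subspace :: "'a measure \<Rightarrow> ('a \<Rightarrow> real^'p) \<Rightarrow> ('a \<Rightarrow> real) \<Rightarrow> (real^'p) set \<Rightarrow> bool" where
  "dim_red_subspace M X Y S \<longleftrightarrow> subspace S \<and> cond_indep M Y X (\<lambda>\<omega>. oproj S (X \<omega>))"

definition central_subspace :: "'a measure \<Rightarrow> ('a \<Rightarrow> real^'p) \<Rightarrow> ('a \<Rightarrow> real) \<Rightarrow> (real^'p) set" where
  "central_subspace M X Y = \<Inter> {S. dim_red_subspace M X Y S}"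

text \<open>The class G of conditional densities on Yset, indexed by r in R^N
  (vectors of R^{d_max} are represented as functions nat => real, zero beyond d_max).\<close>
definition dens_class :: "real set \<Rightarrow> ((nat \<Rightarrow> real) \<Rightarrow> real \<Rightarrow> real) set" where
  "dens_class Yset = {g. (\<lambda>(r, y). g r y) \<in> borel_measurable borel
       \<and> (\<forall>r y. 0 \<le> g r y)
       \<and> (\<forall>r. (\<integral>\<^sup>+ y. ennreal (g r y) * indicator Yset y \<partial>lborel) = 1)}"

definition dens_class_d :: "real set \<Rightarrow> nat \<Rightarrow> ((nat \<Rightarrow> real) \<Rightarrow> real \<Rightarrow> real) set" where
  "dens_class_d Yset d = {g \<in> dens_class Yset. \<forall>r r'. (\<forall>i<d. r i = r' i) \<longrightarrow> g r = g r'}"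

definition exp_nll :: "'a measure \<Rightarrow> ('a \<Rightarrow> real) \<Rightarrow> ('a \<Rightarrow> nat \<Rightarrow> real)
     \<Rightarrow> ((nat \<Rightarrow> real) \<Rightarrow> real \<Rightarrow> real) \<Rightarrow> ereal" where
  "exp_nll M Y R g =
     (if (AE \<omega> in M. 0 < g (R \<omega>) (Y \<omega>)) \<and> integrable M (\<lambda>\<omega>. - ln (g (R \<omega>) (Y \<omega>)))
      then ereal (\<integral>\<omega>. - ln (g (R \<omega>) (Y \<omega>)) \<partial>M) else \<infinity>)"

definition loss_d :: "'a measure \<Rightarrow> real set \<Rightarrow> ('a \<Rightarrow> real) \<Rightarrow> ('a \<Rightarrow> nat \<Rightarrow> real) \<Rightarrow> nat \<Rightarrow> ereal" where
  "loss_d M Yset Y R d = (INF g \<in> dens_class_d Yset d. exp_nll M Y R g)"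

definition d_star :: "'a measure \<Rightarrow> real set \<Rightarrow> ('a \<Rightarrow> real) \<Rightarrow> ('a \<Rightarrow> nat \<Rightarrow> real) \<Rightarrow> nat \<Rightarrow> nat" where
  "d_star M Yset Y R dmax = (LEAST d. d \<le> dmax \<and> loss_d M Yset Y R d = loss_d M Yset Y R dmax)"

definition is_cond_density :: "'a measure \<Rightarrow> real set \<Rightarrow> ('a \<Rightarrow> real) \<Rightarrow> ('a \<Rightarrow> nat \<Rightarrow> real)
     \<Rightarrow> ((nat \<Rightarrow> real) \<Rightarrow> real \<Rightarrow> real) \<Rightarrow> bool" where
  "is_cond_density M Yset Y Z g \<longleftrightarrow> g \<in> dens_class Yset \<and>
     (\<forall>A \<in> sets borel. \<forall>C \<in> sets borel.
        emeasure M {\<omega> \<in> space M. Y \<omega> \<in> A \<and> Z \<omega> \<in> C}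
        = (\<integral>\<^sup>+ \<omega>. indicator C (Z \<omega>) *
              (\<integral>\<^sup>+ y. ennreal (g (Z \<omega>) y) * indicator (A \<inter> Yset) y \<partial>lborel) \<partial>M))"

end

theory Submission
  imports Defs
begin

text \<open>Restricting densities to depend on the first d coordinates of R can only increase the
  expected negative log-likelihood, and by Gibbs' inequality the infimum L_d is attained by the
  true conditional density of Y given those d coordinates. As R vanishes beyond the dimension n of
  the central subspace, L_dmax = L_n. Conversely, if L_d = L_n for some d < n, the equality case of
  Gibbs' inequality forces the conditional law of Y given R to agree almost surely with its
  conditional law given the first d coordinates. Since the projection onto the central subspace is
  a measurable function of R, Y is then conditionally independent of X given the projection onto
  the span of the first d basis vectors, so the central subspace would have dimension at most d.\<close>

lemma oproj_characterization:
  fixes S :: "(real^'p) set"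
  assumes "subspace S"
  shows "oproj S x \<in> S \<and> (\<forall>s\<in>S. inner (x - oproj S x) s = 0)"
proof -
  have unique: "y' = y"
    if "y \<in> S" "\<forall>s\<in>S. inner (x - y) s = 0" "y' \<in> S" "\<forall>s\<in>S. inner (x - y') s = 0" for y y'
  proof -
    have "y - y' \<in> S" using that assms by (simp add: subspace_diff)
    then have "inner (y - y') (y - y') = inner (x - y') (y - y') - inner (x - y) (y - y')"
      by (simp add: inner_diff_left)
    also have "\<dots> = 0" using that \<open>y - y' \<in> S\<close> by simp
    finally show ?thesis by simp
  qed
  obtain y z where "y \<in> span S" "\<And>w. w \<in> span S \<Longrightarrow> orthogonal z w" "x = y + z"
    using orthogonal_subspace_decomp_exists[of S x] by blast
  moreover have "span S = S" using assms by (simp add: span_eq_iff)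
  ultimately have y: "y \<in> S \<and> (\<forall>s\<in>S. inner (x - y) s = 0)"
    by (auto simp: orthogonal_def)
  show ?thesis
    unfolding oproj_def by (rule theI[of _ y]) (use y unique in auto)
qed

lemma oproj_eqI:
  fixes S :: "(real^'p) set"
  assumes "subspace S" "y \<in> S" "\<forall>s\<in>S. inner (x - y) s = 0"
  shows "oproj S x = y"
proof -
  have P: "oproj S x \<in> S" "\<forall>s\<in>S. inner (x - oproj S x) s = 0"
    using oproj_characterization[OF assms(1)] by auto
  have "y - oproj S x \<in> S" using assms P by (simp add: subspace_diff)
  then have "inner (y - oproj S x) (y - oproj S x)
      = inner (x - oproj S x) (y - oproj S x) - inner (x - y) (y - oproj S x)"
    by (simp add: inner_diff_left)
  also have "\<dots> = 0" using assms P \<open>y - oproj S x \<in> S\<close> by simp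
  finally show ?thesis by simp
qed

lemma linear_oproj:
  fixes S :: "(real^'p) set"
  assumes "subspace S"
  shows "linear (oproj S)"
proof (rule linearI)
  fix x y :: "real^'p"
  show "oproj S (x + y) = oproj S x + oproj S y"
    using oproj_characterization[OF assms, of x] oproj_characterization[OF assms, of y] assms
    by (intro oproj_eqI) (auto simp: subspace_add inner_diff_left inner_add_left algebra_simps)
next
  fix c :: real and x :: "real^'p"
  show "oproj S (c *\<^sub>R x) = c *\<^sub>R oproj S x"
    using oproj_characterization[OF assms, of x] assms
    by (intro oproj_eqI) (auto simp: subspace_scale inner_diff_left algebra_simps)
qed

lemma borel_measurable_oproj:
  fixes S :: "(real^'p) set"
  assumes "subspace S"
  shows "oproj S \<in> borel_measurable borel"
  using linear_oproj[OF assms]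
  by (intro borel_measurable_continuous_onI linear_continuous_on)
     (simp flip: linear_conv_bounded_linear)

lemma inner_oproj:
  fixes S :: "(real^'p) set"
  assumes "subspace S" "b \<in> S"
  shows "inner b (oproj S x) = inner b x"
proof -
  have "inner (x - oproj S x) b = 0" using oproj_characterization[OF assms(1), of x] assms(2) by auto
  then show ?thesis by (simp add: inner_commute inner_diff_right)
qed

definition coords :: "(nat \<Rightarrow> real^'p) \<Rightarrow> nat \<Rightarrow> real^'p \<Rightarrow> nat \<Rightarrow> real" where
  "coords B n x = (\<lambda>i. if i < n then inner (B i) x else 0)"

definition trunc :: "nat \<Rightarrow> (nat \<Rightarrow> real) \<Rightarrow> nat \<Rightarrow> real" where
  "trunc d r = (\<lambda>i. if i < d then r i else 0)"

lemma borel_measurable_coords: "coords B n \<in> borel_measurable borel"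
proof (intro borel_measurable_continuous_onI continuous_on_coordinatewise_then_product)
  show "continuous_on UNIV (\<lambda>x. coords B n x i)" for i
    by (cases "i < n") (auto simp: coords_def intro!: continuous_intros)
qed

lemma borel_measurable_trunc: "trunc d \<in> borel_measurable borel"
proof (intro borel_measurable_continuous_onI continuous_on_coordinatewise_then_product)
  show "continuous_on UNIV (\<lambda>r. trunc d r i)" for i
    by (cases "i < d") (auto simp: trunc_def intro!: continuous_on_product_then_coordinatewise)
qed

lemma trunc_coords: "d \<le> n \<Longrightarrow> trunc d (coords B n x) = coords B d x"
  by (auto simp: trunc_def coords_def)

lemma coords_oproj:
  fixes S :: "(real^'p) set"
  assumes "subspace S" "B ` {..<n} \<subseteq> S"
  shows "coords B n (oproj S x) = coords B n x"
  using assms by (auto simp: coords_def inner_oproj image_subset_iff)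

lemma dual_vector_exists:
  fixes B :: "nat \<Rightarrow> real^'p"
  assumes inj: "inj_on B {..<n}" and indep: "independent (B ` {..<n})" and "j < n"
  shows "\<exists>D \<in> span (B ` {..<n}). \<forall>i<n. inner (B i) D = (if i = j then 1 else 0)"
proof -
  define V where "V = span (B ` ({..<n} - {j}))"
  have "subspace V" unfolding V_def by simp
  define u where "u = B j - oproj V (B j)"
  have u_orth: "inner (B i) u = 0" if "i < n" "i \<noteq> j" for i
  proof -
    have "B i \<in> V" unfolding V_def using that by (intro span_base) auto
    then show ?thesis
      using oproj_characterization[OF \<open>subspace V\<close>, of "B j"] by (simp add: u_def inner_commute)
  qed
  have pV: "oproj V (B j) \<in> V" using oproj_characterization[OF \<open>subspace V\<close>] by auto
  have "V \<subseteq> span (B ` {..<n})" unfolding V_def by (intro span_mono) auto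
  then have u_span: "u \<in> span (B ` {..<n})"
    unfolding u_def using pV \<open>j < n\<close> by (intro span_diff) (auto intro: span_base)
  have "u \<noteq> 0"
  proof
    assume "u = 0"
    then have "B j \<in> span (B ` ({..<n} - {j}))" using pV unfolding u_def V_def by simp
    moreover have "B ` ({..<n} - {j}) = B ` {..<n} - {B j}"
      using inj \<open>j < n\<close> by (auto simp: inj_on_def)
    ultimately show False using indep \<open>j < n\<close> unfolding dependent_def by auto
  qed
  have "inner (oproj V (B j)) u = 0"
    using oproj_characterization[OF \<open>subspace V\<close>, of "B j"] pV by (simp add: u_def inner_commute)
  then have Bj_u: "inner (B j) u = inner u u"
    by (simp add: u_def inner_diff_left inner_diff_right inner_commute)
  define D where "D = (1 / inner u u) *\<^sub>R u"
  have "inner (B i) D = (if i = j then 1 else 0)" if "i < n" for i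
    using that \<open>u \<noteq> 0\<close> Bj_u u_orth by (auto simp: D_def)
  moreover have "D \<in> span (B ` {..<n})" unfolding D_def using u_span by (simp add: span_scale)
  ultimately show ?thesis by blast
qed

lemma oproj_span_coords:
  fixes B :: "nat \<Rightarrow> real^'p"
  assumes "inj_on B {..<n}" "independent (B ` {..<n})"
  obtains K where "K \<in> borel_measurable borel" "\<And>x. K (coords B n x) = oproj (span (B ` {..<n})) x"
proof -
  let ?S = "span (B ` {..<n})"
  obtain D where D: "\<And>j. j < n \<Longrightarrow> D j \<in> ?S \<and> (\<forall>i<n. inner (B i) (D j) = (if i = j then 1 else 0))"
    using dual_vector_exists[OF assms] by metis
  define K where "K = (\<lambda>r::nat \<Rightarrow> real. \<Sum>j<n. r j *\<^sub>R D j)"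
  have "K \<in> borel_measurable borel"
    unfolding K_def by (intro borel_measurable_continuous_onI continuous_intros
        continuous_on_product_then_coordinatewise continuous_on_id)
  moreover have "K (coords B n x) = oproj ?S x" for x
  proof (rule oproj_eqI[symmetric])
    show "K (coords B n x) \<in> ?S" unfolding K_def using D by (intro span_sum span_scale) auto
    have "inner (x - K (coords B n x)) (B i) = 0" if "i < n" for i
    proof -
      have "inner (B i) (K (coords B n x)) = (\<Sum>j<n. coords B n x j * inner (B i) (D j))"
        unfolding K_def by (simp add: inner_sum_right)
      also have "\<dots> = (\<Sum>j<n. if j = i then inner (B i) x else 0)"
        using D that by (intro sum.cong) (auto simp: coords_def)
      also have "\<dots> = inner (B i) x" using that by simp
      finally show ?thesis by (simp add: inner_diff_left inner_diff_right inner_commute)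
    qed
    then show "\<forall>s\<in>?S. inner (x - K (coords B n x)) s = 0"
      using orthogonal_to_span[of _ "B ` {..<n}" "x - K (coords B n x)"] by (auto simp: orthogonal_def)
  qed simp
  ultimately show ?thesis using that by blast
qed

lemma borel_measurable_fst_snd [measurable]:
  "fst \<in> borel_measurable (borel :: ('a::topological_space \<times> 'b::topological_space) measure)"
  "snd \<in> borel_measurable (borel :: ('a::topological_space \<times> 'b::topological_space) measure)"
  by (intro borel_measurable_continuous_onI continuous_on_fst continuous_on_snd continuous_on_id)+

lemma dens_classD:
  assumes "g \<in> dens_class Yset"
  shows "(\<lambda>x. g (fst x) (snd x)) \<in> borel_measurable (borel :: ((nat \<Rightarrow> real) \<times> real) measure)"
    and "0 \<le> g r y"
    and "(\<integral>\<^sup>+y. ennreal (g r y) * indicator Yset y \<partial>lborel) = 1"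
    and "g r \<in> borel_measurable borel"
proof -
  show meas: "(\<lambda>x. g (fst x) (snd x)) \<in> borel_measurable borel"
    using assms by (simp add: dens_class_def split_beta')
  have "(\<lambda>y::real. (r, y)) \<in> borel_measurable borel" by measurable
  from measurable_compose[OF this meas] show "g r \<in> borel_measurable borel" by simp
qed (use assms in \<open>simp_all add: dens_class_def\<close>)

lemma borel_measurable_dens_comp:
  assumes "g \<in> dens_class Yset" and [measurable]: "Z \<in> borel_measurable M" "Y \<in> borel_measurable M"
  shows "(\<lambda>\<omega>. g (Z \<omega>) (Y \<omega>)) \<in> borel_measurable M"
proof -
  have "(\<lambda>\<omega>. (Z \<omega>, Y \<omega>)) \<in> measurable M (borel :: ((nat \<Rightarrow> real) \<times> real) measure)" by measurable
  from measurable_compose[OF this dens_classD(1)[OF assms(1)]] show ?thesis by simp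
qed

lemma nn_integral_density_section:
  fixes Z :: "'a \<Rightarrow> nat \<Rightarrow> real"
  assumes [measurable]: "Z \<in> borel_measurable M" "Yset \<in> sets borel"
    and [measurable]: "(\<lambda>x. p (fst x) (snd x)) \<in> borel_measurable borel"
    and [measurable]: "f \<in> borel_measurable (borel :: ((nat \<Rightarrow> real) \<times> real) measure)"
  shows "integral\<^sup>N (density (distr (M \<Otimes>\<^sub>M lborel) borel (\<lambda>(\<omega>, y). (Z \<omega>, y)))
                 (\<lambda>(r, y). ennreal (p r y) * indicator Yset y)) f
       = (\<integral>\<^sup>+\<omega>. \<integral>\<^sup>+y. f (Z \<omega>, y) * (ennreal (p (Z \<omega>) y) * indicator Yset y) \<partial>lborel \<partial>M)"
proof -
  let ?Q = "\<lambda>(\<omega>, y). (Z \<omega>, y)"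
  let ?d = "\<lambda>(r, y). ennreal (p r y) * indicator Yset y"
  have [measurable]: "?Q \<in> measurable (M \<Otimes>\<^sub>M lborel) (borel :: ((nat \<Rightarrow> real) \<times> real) measure)"
    by measurable
  have [measurable]: "?d \<in> borel_measurable borel" by measurable
  have "integral\<^sup>N (density (distr (M \<Otimes>\<^sub>M lborel) borel ?Q) ?d) f
      = (\<integral>\<^sup>+x. ?d x * f x \<partial>distr (M \<Otimes>\<^sub>M lborel) borel ?Q)"
    by (rule nn_integral_density) measurable
  also have "\<dots> = (\<integral>\<^sup>+x. ?d (?Q x) * f (?Q x) \<partial>(M \<Otimes>\<^sub>M lborel))"
    by (rule nn_integral_distr) measurable
  also have "\<dots> = (\<integral>\<^sup>+\<omega>. \<integral>\<^sup>+y. ?d (?Q (\<omega>, y)) * f (?Q (\<omega>, y)) \<partial>lborel \<partial>M)"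
    by (rule lborel.nn_integral_fst[symmetric]) measurable
  also have "\<dots> = (\<integral>\<^sup>+\<omega>. \<integral>\<^sup>+y. f (Z \<omega>, y) * (ennreal (p (Z \<omega>) y) * indicator Yset y) \<partial>lborel \<partial>M)"
    by (simp add: mult.commute)
  finally show ?thesis .
qed

lemma distr_cond_density:
  fixes Z :: "'a \<Rightarrow> nat \<Rightarrow> real"
  assumes "prob_space M" and [measurable]: "Z \<in> borel_measurable M" "Y \<in> borel_measurable M"
    and [measurable]: "Yset \<in> sets borel" and cd: "is_cond_density M Yset Y Z p"
  shows "distr M borel (\<lambda>\<omega>. (Z \<omega>, Y \<omega>))
       = density (distr (M \<Otimes>\<^sub>M lborel) borel (\<lambda>(\<omega>, y). (Z \<omega>, y)))
                 (\<lambda>(r, y). ennreal (p r y) * indicator Yset y)"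
    (is "?N1 = ?N2")
proof -
  interpret prob_space M by fact
  have p_dens: "p \<in> dens_class Yset" using cd by (simp add: is_cond_density_def)
  note [measurable] = dens_classD(1,4)[OF p_dens]
  let ?E = "{a \<times> b | a b. a \<in> sets (borel :: (nat \<Rightarrow> real) measure) \<and> b \<in> sets (borel :: real measure)}"
  have sets_borel: "sets (borel :: ((nat \<Rightarrow> real) \<times> real) measure) = sigma_sets UNIV ?E"
    by (subst borel_prod[symmetric]) (simp add: sets_pair_measure)
  show ?thesis
  proof (rule measure_eqI_generator_eq[where \<Omega>=UNIV and E="?E" and A="\<lambda>_. UNIV"])
    show "Int_stable ?E" by (rule Int_stable_pair_measure_generator)
    show "sets ?N1 = sigma_sets UNIV ?E" "sets ?N2 = sigma_sets UNIV ?E"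
      using sets_borel by simp_all
    show "emeasure ?N1 UNIV \<noteq> \<infinity>" for i :: nat by (simp add: emeasure_distr emeasure_space_1)
  next
    fix E assume "E \<in> ?E"
    then obtain a b where E: "E = a \<times> b" and [measurable]: "a \<in> sets borel" "b \<in> sets borel" by auto
    have E_sets[measurable]: "E \<in> sets (borel :: ((nat \<Rightarrow> real) \<times> real) measure)"
      unfolding E by (subst borel_prod[symmetric]) auto
    have section_eq: "indicator a (Z \<omega>) * (\<integral>\<^sup>+y. ennreal (p (Z \<omega>) y) * indicator (b \<inter> Yset) y \<partial>lborel)
        = (\<integral>\<^sup>+y. indicator E (Z \<omega>, y) * (ennreal (p (Z \<omega>) y) * indicator Yset y) \<partial>lborel)" for \<omega>
      by (subst nn_integral_cmult[symmetric]) (auto intro!: nn_integral_cong simp: E indicator_def)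
    have "(\<lambda>\<omega>. (Z \<omega>, Y \<omega>)) -` E \<inter> space M = {\<omega> \<in> space M. Y \<omega> \<in> b \<and> Z \<omega> \<in> a}"
      by (auto simp: E)
    then have "emeasure ?N1 E = emeasure M {\<omega> \<in> space M. Y \<omega> \<in> b \<and> Z \<omega> \<in> a}"
      by (simp add: emeasure_distr[OF _ E_sets])
    also have "\<dots> = (\<integral>\<^sup>+\<omega>. indicator a (Z \<omega>) *
        (\<integral>\<^sup>+y. ennreal (p (Z \<omega>) y) * indicator (b \<inter> Yset) y \<partial>lborel) \<partial>M)"
      using cd by (simp add: is_cond_density_def)
    also have "\<dots> = integral\<^sup>N ?N2 (indicator E)"
      by (simp only: section_eq nn_integral_density_section[OF assms(2,4) dens_classD(1)[OF p_dens]]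
          borel_measurable_indicator[OF E_sets])
    also have "\<dots> = emeasure ?N2 E"
      using E_sets by (simp add: nn_integral_indicator)
    finally show "emeasure ?N1 E = emeasure ?N2 E" .
  qed (auto intro!: exI[of _ UNIV])
qed

lemma nn_integral_cond_density:
  fixes Z :: "'a \<Rightarrow> nat \<Rightarrow> real"
  assumes "prob_space M" and [measurable]: "Z \<in> borel_measurable M" "Y \<in> borel_measurable M"
    and [measurable]: "Yset \<in> sets borel" and cd: "is_cond_density M Yset Y Z p"
    and [measurable]: "f \<in> borel_measurable (borel :: ((nat \<Rightarrow> real) \<times> real) measure)"
  shows "(\<integral>\<^sup>+\<omega>. f (Z \<omega>, Y \<omega>) \<partial>M) =
         (\<integral>\<^sup>+\<omega>. \<integral>\<^sup>+y. f (Z \<omega>, y) * (ennreal (p (Z \<omega>) y) * indicator Yset y) \<partial>lborel \<partial>M)"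
proof -
  have p_dens: "p \<in> dens_class Yset" using cd by (simp add: is_cond_density_def)
  have "(\<integral>\<^sup>+\<omega>. f (Z \<omega>, Y \<omega>) \<partial>M) = integral\<^sup>N (distr M borel (\<lambda>\<omega>. (Z \<omega>, Y \<omega>))) f"
    by (simp add: nn_integral_distr)
  also have "\<dots> = (\<integral>\<^sup>+\<omega>. \<integral>\<^sup>+y. f (Z \<omega>, y) * (ennreal (p (Z \<omega>) y) * indicator Yset y) \<partial>lborel \<partial>M)"
    by (simp only: distr_cond_density[OF assms(1-5)]
        nn_integral_density_section[OF assms(2,4) dens_classD(1)[OF p_dens] assms(6)])
  finally show ?thesis .
qed

lemma AE_cond_density_pos:
  fixes Z :: "'a \<Rightarrow> nat \<Rightarrow> real"
  assumes "prob_space M" and [measurable]: "Z \<in> borel_measurable M" "Y \<in> borel_measurable M"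
    and [measurable]: "Yset \<in> sets borel" and cd: "is_cond_density M Yset Y Z p"
  shows "AE \<omega> in M. 0 < p (Z \<omega>) (Y \<omega>)"
proof -
  have p_dens: "p \<in> dens_class Yset" using cd by (simp add: is_cond_density_def)
  note [measurable] = dens_classD(1)[OF p_dens]
  let ?f = "indicator {x. p (fst x) (snd x) \<le> 0} :: _ \<Rightarrow> ennreal"
  have "(\<integral>\<^sup>+\<omega>. ?f (Z \<omega>, Y \<omega>) \<partial>M) =
        (\<integral>\<^sup>+\<omega>. \<integral>\<^sup>+y. ?f (Z \<omega>, y) * (ennreal (p (Z \<omega>) y) * indicator Yset y) \<partial>lborel \<partial>M)"
    by (rule nn_integral_cond_density[OF assms]) measurable
  also have "\<dots> = 0"
  proof -
    have "?f (r, y) * (ennreal (p r y) * indicator Yset y) = 0" for r y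
      by (auto simp: indicator_def ennreal_eq_0_iff)
    then show ?thesis by (simp only: nn_integral_const mult_zero_left)
  qed
  finally have "AE \<omega> in M. ?f (Z \<omega>, Y \<omega>) = 0"
    by (subst (asm) nn_integral_0_iff_AE) measurable
  then show ?thesis by eventually_elim (auto simp: indicator_def)
qed

lemma integrable_density_ratio:
  fixes Z :: "'a \<Rightarrow> nat \<Rightarrow> real"
  assumes "prob_space M" and [measurable]: "Z \<in> borel_measurable M" "Y \<in> borel_measurable M"
    and [measurable]: "Yset \<in> sets borel" and cd: "is_cond_density M Yset Y Z p"
    and g: "g \<in> dens_class Yset"
  shows "integrable M (\<lambda>\<omega>. g (Z \<omega>) (Y \<omega>) / p (Z \<omega>) (Y \<omega>))"
    and "(\<integral>\<omega>. g (Z \<omega>) (Y \<omega>) / p (Z \<omega>) (Y \<omega>) \<partial>M) \<le> 1"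
proof -
  interpret prob_space M by fact
  have p_dens: "p \<in> dens_class Yset" using cd by (simp add: is_cond_density_def)
  note [measurable] = dens_classD(1)[OF p_dens] dens_classD(1)[OF g]
    borel_measurable_dens_comp[OF p_dens] borel_measurable_dens_comp[OF g]
  let ?W = "\<lambda>\<omega>. g (Z \<omega>) (Y \<omega>) / p (Z \<omega>) (Y \<omega>)"
  have W_nonneg: "0 \<le> ?W \<omega>" for \<omega> using dens_classD(2)[OF p_dens] dens_classD(2)[OF g] by simp
  have ratio_le: "ennreal (g r y / p r y) * ennreal (p r y) \<le> ennreal (g r y)" for r y
    using dens_classD(2)[OF p_dens, of r y] dens_classD(2)[OF g, of r y]
    by (cases "p r y = 0") (simp_all add: ennreal_mult[symmetric])
  have "(\<integral>\<^sup>+\<omega>. ennreal (?W \<omega>) \<partial>M) =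
        (\<integral>\<^sup>+\<omega>. \<integral>\<^sup>+y. ennreal (g (Z \<omega>) y / p (Z \<omega>) y) * (ennreal (p (Z \<omega>) y) * indicator Yset y) \<partial>lborel \<partial>M)"
    using nn_integral_cond_density[OF assms(1-5), of "\<lambda>x. ennreal (g (fst x) (snd x) / p (fst x) (snd x))"]
    by simp
  also have "\<dots> \<le> (\<integral>\<^sup>+\<omega>. \<integral>\<^sup>+y. ennreal (g (Z \<omega>) y) * indicator Yset y \<partial>lborel \<partial>M)"
    using ratio_le by (intro nn_integral_mono) (simp add: mult.assoc[symmetric] mult_right_mono)
  also have "\<dots> = 1" by (simp add: dens_classD(3)[OF g] emeasure_space_1)
  finally have nn_le: "(\<integral>\<^sup>+\<omega>. ennreal (?W \<omega>) \<partial>M) \<le> 1" .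
  then show "integrable M ?W"
    using W_nonneg by (intro integrableI_nonneg) (auto simp: le_less_trans[OF nn_le])
  have "(\<integral>\<omega>. ?W \<omega> \<partial>M) = enn2real (\<integral>\<^sup>+\<omega>. ennreal (?W \<omega>) \<partial>M)"
    using W_nonneg by (intro integral_eq_nn_integral) auto
  also have "\<dots> \<le> enn2real 1" by (rule enn2real_mono[OF nn_le]) simp
  finally show "(\<integral>\<omega>. ?W \<omega> \<partial>M) \<le> 1" by simp
qed

lemma nll_gap_ge_integral:
  fixes Z :: "'a \<Rightarrow> nat \<Rightarrow> real"
  assumes "prob_space M" and [measurable]: "Z \<in> borel_measurable M" "Y \<in> borel_measurable M"
    and [measurable]: "Yset \<in> sets borel" and cd: "is_cond_density M Yset Y Z p"
    and g: "g \<in> dens_class Yset"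
    and int_g: "integrable M (\<lambda>\<omega>. - ln (g (Z \<omega>) (Y \<omega>)))"
    and int_p: "integrable M (\<lambda>\<omega>. - ln (p (Z \<omega>) (Y \<omega>)))"
    and g_pos: "AE \<omega> in M. 0 < g (Z \<omega>) (Y \<omega>)"
  defines "W \<equiv> \<lambda>\<omega>. g (Z \<omega>) (Y \<omega>) / p (Z \<omega>) (Y \<omega>)"
  shows "integrable M (\<lambda>\<omega>. W \<omega> - 1 - ln (W \<omega>))"
    and "AE \<omega> in M. 0 < W \<omega>"
    and "(\<integral>\<omega>. W \<omega> - 1 - ln (W \<omega>) \<partial>M)
           \<le> (\<integral>\<omega>. - ln (g (Z \<omega>) (Y \<omega>)) \<partial>M) - (\<integral>\<omega>. - ln (p (Z \<omega>) (Y \<omega>)) \<partial>M)"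
proof -
  interpret prob_space M by fact
  have p_dens: "p \<in> dens_class Yset" using cd by (simp add: is_cond_density_def)
  note [measurable] = borel_measurable_dens_comp[OF p_dens] borel_measurable_dens_comp[OF g]
  have [measurable]: "W \<in> borel_measurable M" unfolding W_def by measurable
  have int_W: "integrable M W" and W_le: "(\<integral>\<omega>. W \<omega> \<partial>M) \<le> 1"
    unfolding W_def using integrable_density_ratio[OF assms(1-6)] by auto
  have ln_W: "AE \<omega> in M. 0 < W \<omega> \<and> ln (W \<omega>) = - ln (p (Z \<omega>) (Y \<omega>)) - - ln (g (Z \<omega>) (Y \<omega>))"
    using AE_cond_density_pos[OF assms(1-5)] g_pos by eventually_elim (auto simp: W_def ln_div)
  then show "AE \<omega> in M. 0 < W \<omega>" by eventually_elim simp
  have int_ln_W: "integrable M (\<lambda>\<omega>. ln (W \<omega>))"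
  proof (rule integrable_cong_AE_imp)
    show "integrable M (\<lambda>\<omega>. - ln (p (Z \<omega>) (Y \<omega>)) - - ln (g (Z \<omega>) (Y \<omega>)))"
      using int_p int_g by simp
    show "AE \<omega> in M. - ln (p (Z \<omega>) (Y \<omega>)) - - ln (g (Z \<omega>) (Y \<omega>)) = ln (W \<omega>)"
      using ln_W by eventually_elim simp
  qed measurable
  then show "integrable M (\<lambda>\<omega>. W \<omega> - 1 - ln (W \<omega>))" using int_W by simp
  have "(\<integral>\<omega>. ln (W \<omega>) \<partial>M) = (\<integral>\<omega>. - ln (p (Z \<omega>) (Y \<omega>)) - - ln (g (Z \<omega>) (Y \<omega>)) \<partial>M)"
  proof (rule integral_cong_AE)
    show "AE \<omega> in M. ln (W \<omega>) = - ln (p (Z \<omega>) (Y \<omega>)) - - ln (g (Z \<omega>) (Y \<omega>))"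
      using ln_W by eventually_elim simp
  qed measurable
  also have "\<dots> = (\<integral>\<omega>. - ln (p (Z \<omega>) (Y \<omega>)) \<partial>M) - (\<integral>\<omega>. - ln (g (Z \<omega>) (Y \<omega>)) \<partial>M)"
    using int_p int_g by (rule Bochner_Integration.integral_diff)
  finally have "(\<integral>\<omega>. ln (W \<omega>) \<partial>M)
      = (\<integral>\<omega>. - ln (p (Z \<omega>) (Y \<omega>)) \<partial>M) - (\<integral>\<omega>. - ln (g (Z \<omega>) (Y \<omega>)) \<partial>M)" .
  moreover have "(\<integral>\<omega>. W \<omega> - 1 - ln (W \<omega>) \<partial>M) = (\<integral>\<omega>. W \<omega> \<partial>M) - 1 - (\<integral>\<omega>. ln (W \<omega>) \<partial>M)"
    using int_W int_ln_W by (simp add: prob_space)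
  ultimately show "(\<integral>\<omega>. W \<omega> - 1 - ln (W \<omega>) \<partial>M)
      \<le> (\<integral>\<omega>. - ln (g (Z \<omega>) (Y \<omega>)) \<partial>M) - (\<integral>\<omega>. - ln (p (Z \<omega>) (Y \<omega>)) \<partial>M)"
    using W_le by linarith
qed

lemma nll_cond_density_le:
  fixes Z :: "'a \<Rightarrow> nat \<Rightarrow> real"
  assumes "prob_space M" "Z \<in> borel_measurable M" "Y \<in> borel_measurable M"
    "Yset \<in> sets borel" "is_cond_density M Yset Y Z p" "g \<in> dens_class Yset"
    "integrable M (\<lambda>\<omega>. - ln (g (Z \<omega>) (Y \<omega>)))" "integrable M (\<lambda>\<omega>. - ln (p (Z \<omega>) (Y \<omega>)))"
    "AE \<omega> in M. 0 < g (Z \<omega>) (Y \<omega>)"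
  shows "(\<integral>\<omega>. - ln (p (Z \<omega>) (Y \<omega>)) \<partial>M) \<le> (\<integral>\<omega>. - ln (g (Z \<omega>) (Y \<omega>)) \<partial>M)"
proof -
  let ?W = "\<lambda>\<omega>. g (Z \<omega>) (Y \<omega>) / p (Z \<omega>) (Y \<omega>)"
  note gap = nll_gap_ge_integral[OF assms]
  have "AE \<omega> in M. 0 \<le> ?W \<omega> - 1 - ln (?W \<omega>)"
    using gap(2) by eventually_elim (auto dest: ln_le_minus_one)
  then have "0 \<le> (\<integral>\<omega>. ?W \<omega> - 1 - ln (?W \<omega>) \<partial>M)" by (rule integral_nonneg_AE)
  then show ?thesis using gap(3) by linarith
qed

lemma AE_eq_cond_density_of_nll_le:
  fixes Z :: "'a \<Rightarrow> nat \<Rightarrow> real"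
  assumes "prob_space M" "Z \<in> borel_measurable M" "Y \<in> borel_measurable M"
    "Yset \<in> sets borel" "is_cond_density M Yset Y Z p" "g \<in> dens_class Yset"
    "integrable M (\<lambda>\<omega>. - ln (g (Z \<omega>) (Y \<omega>)))" "integrable M (\<lambda>\<omega>. - ln (p (Z \<omega>) (Y \<omega>)))"
    "AE \<omega> in M. 0 < g (Z \<omega>) (Y \<omega>)"
    and nll_le: "(\<integral>\<omega>. - ln (g (Z \<omega>) (Y \<omega>)) \<partial>M) \<le> (\<integral>\<omega>. - ln (p (Z \<omega>) (Y \<omega>)) \<partial>M)"
  shows "AE \<omega> in M. g (Z \<omega>) (Y \<omega>) = p (Z \<omega>) (Y \<omega>)"
proof -
  let ?W = "\<lambda>\<omega>. g (Z \<omega>) (Y \<omega>) / p (Z \<omega>) (Y \<omega>)"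
  note gap = nll_gap_ge_integral[OF assms(1-9)]
  have H_nonneg: "AE \<omega> in M. 0 \<le> ?W \<omega> - 1 - ln (?W \<omega>)"
    using gap(2) by eventually_elim (auto dest: ln_le_minus_one)
  have "(\<integral>\<omega>. ?W \<omega> - 1 - ln (?W \<omega>) \<partial>M) = 0"
    using gap(3) nll_le integral_nonneg_AE[OF H_nonneg] by linarith
  then have "AE \<omega> in M. ?W \<omega> - 1 - ln (?W \<omega>) = 0"
    using integral_nonneg_eq_0_iff_AE[OF gap(1) H_nonneg] by simp
  then show ?thesis using gap(2) AE_cond_density_pos[OF assms(1-5)]
  proof eventually_elim
    case (elim \<omega>)
    then have "?W \<omega> = 1" using ln_eq_minus_one[of "?W \<omega>"] by auto
    then show ?case using elim by simp
  qed
qed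

lemma borel_measurable_nn_integral_section:
  fixes Z :: "'a \<Rightarrow> 'b::second_countable_topology"
  assumes "Z \<in> borel_measurable M" "h \<in> borel_measurable (borel :: ('b \<times> real) measure)"
  shows "(\<lambda>\<omega>. \<integral>\<^sup>+y. h (Z \<omega>, y) \<partial>lborel) \<in> borel_measurable M"
proof -
  have "(\<lambda>x. (Z (fst x), snd x)) \<in> measurable (M \<Otimes>\<^sub>M lborel) (borel :: ('b \<times> real) measure)"
    using assms(1) by measurable
  from measurable_compose[OF this assms(2)]
  have "(\<lambda>(\<omega>, y). h (Z \<omega>, y)) \<in> borel_measurable (M \<Otimes>\<^sub>M lborel)" by (simp add: split_beta')
  then show ?thesis by (rule lborel.borel_measurable_nn_integral)
qed

lemma AE_cond_density_agree_on_support: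
  fixes Z :: "'a \<Rightarrow> nat \<Rightarrow> real"
  assumes "prob_space M" and [measurable]: "Z \<in> borel_measurable M" "Y \<in> borel_measurable M"
    and [measurable]: "Yset \<in> sets borel" and cd: "is_cond_density M Yset Y Z p"
    and Q: "Q \<in> dens_class Yset" and eq: "AE \<omega> in M. Q (Z \<omega>) (Y \<omega>) = p (Z \<omega>) (Y \<omega>)"
  shows "AE \<omega> in M. AE y in lborel. y \<in> Yset \<and> 0 < p (Z \<omega>) y \<longrightarrow> Q (Z \<omega>) y = p (Z \<omega>) y"
proof -
  have p_dens: "p \<in> dens_class Yset" using cd by (simp add: is_cond_density_def)
  note [measurable] = dens_classD(1,4)[OF p_dens] dens_classD(1,4)[OF Q]
  let ?f = "indicator {x. Q (fst x) (snd x) \<noteq> p (fst x) (snd x)} :: _ \<Rightarrow> ennreal"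
  let ?h = "\<lambda>x. ?f x * (ennreal (p (fst x) (snd x)) * indicator Yset (snd x))"
  let ?F = "\<lambda>\<omega> y. ?h (Z \<omega>, y)"
  have [measurable]: "(\<lambda>\<omega>. \<integral>\<^sup>+y. ?F \<omega> y \<partial>lborel) \<in> borel_measurable M"
    by (rule borel_measurable_nn_integral_section) measurable
  have "?f \<in> borel_measurable borel" by measurable
  from nn_integral_cond_density[OF assms(1-5) this]
  have "(\<integral>\<^sup>+\<omega>. \<integral>\<^sup>+y. ?F \<omega> y \<partial>lborel \<partial>M) = (\<integral>\<^sup>+\<omega>. ?f (Z \<omega>, Y \<omega>) \<partial>M)"
    by simp
  also have "\<dots> = 0"
    using eq by (subst nn_integral_0_iff_AE) (auto elim!: eventually_mono)
  finally have "AE \<omega> in M. (\<integral>\<^sup>+y. ?F \<omega> y \<partial>lborel) = 0"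
    by (subst (asm) nn_integral_0_iff_AE) measurable
  then show ?thesis
  proof eventually_elim
    case (elim \<omega>)
    then have "AE y in lborel. ?F \<omega> y = 0" by (subst (asm) nn_integral_0_iff_AE) measurable
    then show ?case by eventually_elim (auto simp: indicator_def)
  qed
qed

lemma AE_eq_of_agree_on_support:
  fixes f g :: "real \<Rightarrow> real"
  assumes [measurable]: "f \<in> borel_measurable borel" "g \<in> borel_measurable borel" "Yset \<in> sets borel"
    and f_nonneg: "\<And>y. 0 \<le> f y" and g_nonneg: "\<And>y. 0 \<le> g y"
    and f_norm: "(\<integral>\<^sup>+y. ennreal (f y) * indicator Yset y \<partial>lborel) = 1"
    and g_norm: "(\<integral>\<^sup>+y. ennreal (g y) * indicator Yset y \<partial>lborel) = 1"
    and agree: "AE y in lborel. y \<in> Yset \<and> 0 < f y \<longrightarrow> g y = f y"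
  shows "AE y in lborel. y \<in> Yset \<longrightarrow> g y = f y"
proof -
  \<comment> \<open>g already carries mass 1 on the support of f, so none is left where f vanishes.\<close>
  let ?G = "\<lambda>y. ennreal (g y) * indicator Yset y"
  have "(\<integral>\<^sup>+y. ?G y * indicator {y. 0 < f y} y \<partial>lborel)
      = (\<integral>\<^sup>+y. ennreal (f y) * indicator Yset y \<partial>lborel)"
    using agree by (intro nn_integral_cong_AE) (auto elim!: eventually_mono simp: indicator_def
        ennreal_eq_0_iff order.antisym f_nonneg)
  moreover have "?G y = ?G y * indicator {y. 0 < f y} y + ?G y * indicator {y. f y \<le> 0} y" for y
    by (auto simp: indicator_def)
  then have "(\<integral>\<^sup>+y. ?G y \<partial>lborel) = (\<integral>\<^sup>+y. ?G y * indicator {y. 0 < f y} y \<partial>lborel)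
      + (\<integral>\<^sup>+y. ?G y * indicator {y. f y \<le> 0} y \<partial>lborel)"
    by (subst nn_integral_add[symmetric]) (simp_all, measurable)
  ultimately have "1 = 1 + (\<integral>\<^sup>+y. ?G y * indicator {y. f y \<le> 0} y \<partial>lborel)"
    using f_norm g_norm by simp
  then have "(\<integral>\<^sup>+y. ?G y * indicator {y. f y \<le> 0} y \<partial>lborel) = 0"
    using ennreal_add_left_cancel[of 1 0] by simp
  then have "AE y in lborel. ?G y * indicator {y. f y \<le> 0} y = 0"
    by (subst (asm) nn_integral_0_iff_AE) measurable
  then show ?thesis using agree
  proof eventually_elim
    case (elim y)
    then show ?case using f_nonneg[of y] g_nonneg[of y]
      by (cases "0 < f y") (auto simp: indicator_def ennreal_eq_0_iff)
  qed
qed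

definition dens_prob :: "((nat \<Rightarrow> real) \<Rightarrow> real \<Rightarrow> real) \<Rightarrow> real set \<Rightarrow> real set \<Rightarrow> (nat \<Rightarrow> real) \<Rightarrow> real" where
  "dens_prob g Yset A r = enn2real (\<integral>\<^sup>+y. ennreal (g r y) * indicator (A \<inter> Yset) y \<partial>lborel)"

lemma dens_prob_nonneg [simp]: "0 \<le> dens_prob g Yset A r"
  by (simp add: dens_prob_def)

lemma nn_integral_dens_le_1:
  assumes "g \<in> dens_class Yset"
  shows "(\<integral>\<^sup>+y. ennreal (g r y) * indicator (A \<inter> Yset) y \<partial>lborel) \<le> 1"
proof -
  have "(\<integral>\<^sup>+y. ennreal (g r y) * indicator (A \<inter> Yset) y \<partial>lborel)
      \<le> (\<integral>\<^sup>+y. ennreal (g r y) * indicator Yset y \<partial>lborel)"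
    by (intro nn_integral_mono) (auto simp: indicator_def)
  then show ?thesis using dens_classD(3)[OF assms] by simp
qed

lemma dens_prob_le_1: "g \<in> dens_class Yset \<Longrightarrow> dens_prob g Yset A r \<le> 1"
  unfolding dens_prob_def using enn2real_mono[OF nn_integral_dens_le_1] by fastforce

lemma ennreal_dens_prob:
  "g \<in> dens_class Yset \<Longrightarrow>
    ennreal (dens_prob g Yset A r) = (\<integral>\<^sup>+y. ennreal (g r y) * indicator (A \<inter> Yset) y \<partial>lborel)"
  unfolding dens_prob_def using nn_integral_dens_le_1[of g Yset r A]
  by (intro ennreal_enn2real) (auto simp: less_top[symmetric] top_unique)

lemma borel_measurable_dens_prob:
  assumes "g \<in> dens_class Yset" "A \<in> sets borel" "Yset \<in> sets borel"
  shows "dens_prob g Yset A \<in> borel_measurable borel"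
proof -
  have "(\<lambda>(r, y). g r y) \<in> borel_measurable (borel \<Otimes>\<^sub>M lborel)"
    using assms(1) unfolding dens_class_def
    by (subst measurable_cong_sets[where M'="borel \<Otimes>\<^sub>M borel" and N'=borel]) (simp_all add: borel_prod)
  then show ?thesis unfolding dens_prob_def using assms(2,3) by measurable
qed

lemma dens_prob_cong_AE:
  assumes "AE y in lborel. y \<in> Yset \<longrightarrow> g r y = g' r' y"
  shows "dens_prob g Yset A r = dens_prob g' Yset A r'"
  unfolding dens_prob_def using assms
  by (intro arg_cong[where f=enn2real] nn_integral_cong_AE) (auto elim!: eventually_mono)

lemma integral_indicator_cond_density:
  fixes Z :: "'a \<Rightarrow> nat \<Rightarrow> real"
  assumes "prob_space M" and [measurable]: "Z \<in> borel_measurable M" "Y \<in> borel_measurable M"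
    and [measurable]: "Yset \<in> sets borel" and cd: "is_cond_density M Yset Y Z p"
    and [measurable]: "A \<in> sets borel" "C \<in> sets borel"
  shows "(\<integral>\<omega>. indicator C (Z \<omega>) * indicator A (Y \<omega>) \<partial>M)
       = (\<integral>\<omega>. indicator C (Z \<omega>) * dens_prob p Yset A (Z \<omega>) \<partial>M)"
proof -
  interpret prob_space M by fact
  have p_dens: "p \<in> dens_class Yset" using cd by (simp add: is_cond_density_def)
  note [measurable] = borel_measurable_dens_prob[OF p_dens]
  have "{\<omega> \<in> space M. Y \<omega> \<in> A \<and> Z \<omega> \<in> C} \<in> sets M" by measurable
  moreover have "(\<integral>\<omega>. indicator C (Z \<omega>) * indicator A (Y \<omega>) \<partial>M)
      = (\<integral>\<omega>. indicator {\<omega> \<in> space M. Y \<omega> \<in> A \<and> Z \<omega> \<in> C} \<omega> \<partial>M :: real)"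
    by (rule Bochner_Integration.integral_cong) (auto simp: indicator_def)
  ultimately have "(\<integral>\<omega>. indicator C (Z \<omega>) * indicator A (Y \<omega>) \<partial>M)
      = measure M {\<omega> \<in> space M. Y \<omega> \<in> A \<and> Z \<omega> \<in> C}"
    by simp
  also have "\<dots> = enn2real (\<integral>\<^sup>+\<omega>. indicator C (Z \<omega>) *
      (\<integral>\<^sup>+y. ennreal (p (Z \<omega>) y) * indicator (A \<inter> Yset) y \<partial>lborel) \<partial>M)"
    using cd by (simp add: measure_def is_cond_density_def)
  also have "\<dots> = enn2real (\<integral>\<^sup>+\<omega>. ennreal (indicator C (Z \<omega>) * dens_prob p Yset A (Z \<omega>)) \<partial>M)"
    by (simp add: ennreal_dens_prob[OF p_dens] ennreal_mult' ennreal_indicator)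
  also have "\<dots> = (\<integral>\<omega>. indicator C (Z \<omega>) * dens_prob p Yset A (Z \<omega>) \<partial>M)"
    by (rule integral_eq_nn_integral[symmetric]) measurable
  finally show ?thesis .
qed

lemma AE_dens_prob_eq_of_nll_le:
  fixes Z :: "'a \<Rightarrow> nat \<Rightarrow> real"
  assumes "prob_space M" "Z \<in> borel_measurable M" "Y \<in> borel_measurable M"
    "Yset \<in> sets borel" and cd: "is_cond_density M Yset Y Z p" and Q: "Q \<in> dens_class Yset"
    and "integrable M (\<lambda>\<omega>. - ln (Q (Z \<omega>) (Y \<omega>)))" "integrable M (\<lambda>\<omega>. - ln (p (Z \<omega>) (Y \<omega>)))"
    "AE \<omega> in M. 0 < Q (Z \<omega>) (Y \<omega>)"
    "(\<integral>\<omega>. - ln (Q (Z \<omega>) (Y \<omega>)) \<partial>M) \<le> (\<integral>\<omega>. - ln (p (Z \<omega>) (Y \<omega>)) \<partial>M)"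
  shows "AE \<omega> in M. \<forall>A. dens_prob p Yset A (Z \<omega>) = dens_prob Q Yset A (Z \<omega>)"
proof -
  have p_dens: "p \<in> dens_class Yset" using cd by (simp add: is_cond_density_def)
  have "AE \<omega> in M. Q (Z \<omega>) (Y \<omega>) = p (Z \<omega>) (Y \<omega>)"
    by (rule AE_eq_cond_density_of_nll_le[OF assms])
  from AE_cond_density_agree_on_support[OF assms(1-6) this]
  show ?thesis
  proof eventually_elim
    case (elim \<omega>)
    have "AE y in lborel. y \<in> Yset \<longrightarrow> Q (Z \<omega>) y = p (Z \<omega>) y"
      using elim assms(4) by (intro AE_eq_of_agree_on_support) (auto simp: dens_classD[OF p_dens] dens_classD[OF Q])
    then show ?case by (auto intro: dens_prob_cong_AE elim!: eventually_mono)
  qed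
qed

lemma dens_class_d_trunc:
  assumes "g \<in> dens_class Yset"
  shows "(\<lambda>r. g (trunc d r)) \<in> dens_class_d Yset d"
proof -
  note [measurable] = borel_measurable_trunc dens_classD(1)[OF assms]
  have "(\<lambda>x. g (trunc d (fst x)) (snd x)) \<in> borel_measurable (borel :: ((nat \<Rightarrow> real) \<times> real) measure)"
    using measurable_compose[of "\<lambda>x. (trunc d (fst x), snd x)" borel borel "\<lambda>x. g (fst x) (snd x)"]
    by simp measurable
  moreover have "trunc d r = trunc d r'" if "\<forall>i<d. r i = r' i" for r r'
    using that by (auto simp: trunc_def)
  ultimately show ?thesis
    using assms unfolding dens_class_d_def dens_class_def by (auto simp: split_beta') metis
qed

lemma dens_class_d_trunc_eq: "g \<in> dens_class_d Yset d \<Longrightarrow> g (trunc d r) = g r"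
  by (auto simp: dens_class_d_def trunc_def)

lemma loss_d_eq_of_trunc_fixed:
  assumes "\<And>\<omega>. trunc d (R \<omega>) = R \<omega>" and "d \<le> d'"
  shows "loss_d M Yset Y R d' = loss_d M Yset Y R d"
proof (rule antisym)
  show "loss_d M Yset Y R d' \<le> loss_d M Yset Y R d"
    unfolding loss_d_def using \<open>d \<le> d'\<close> by (intro INF_superset_mono) (auto simp: dens_class_d_def)
next
  have "exp_nll M Y R (\<lambda>r. g (trunc d r)) = exp_nll M Y R g" for g
    by (simp add: exp_nll_def assms(1))
  moreover have "(\<lambda>r. g (trunc d r)) \<in> dens_class_d Yset d" if "g \<in> dens_class_d Yset d'" for g
    using that by (intro dens_class_d_trunc) (simp add: dens_class_d_def)
  ultimately show "loss_d M Yset Y R d \<le> loss_d M Yset Y R d'"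
    unfolding loss_d_def by (intro INF_mono) (metis order_refl)
qed

lemma loss_d_eq_nll_cond_density:
  fixes R :: "'a \<Rightarrow> nat \<Rightarrow> real"
  assumes "prob_space M" and [measurable]: "R \<in> borel_measurable M" "Y \<in> borel_measurable M"
    and [measurable]: "Yset \<in> sets borel"
    and cd: "is_cond_density M Yset Y (\<lambda>\<omega>. trunc d (R \<omega>)) q"
    and int_q: "integrable M (\<lambda>\<omega>. - ln (q (trunc d (R \<omega>)) (Y \<omega>)))"
  shows "loss_d M Yset Y R d = ereal (\<integral>\<omega>. - ln (q (trunc d (R \<omega>)) (Y \<omega>)) \<partial>M)"
proof (rule antisym)
  have q_dens: "q \<in> dens_class Yset" using cd by (simp add: is_cond_density_def)
  have [measurable]: "(\<lambda>\<omega>. trunc d (R \<omega>)) \<in> borel_measurable M"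
    using borel_measurable_trunc by measurable
  show "loss_d M Yset Y R d \<le> ereal (\<integral>\<omega>. - ln (q (trunc d (R \<omega>)) (Y \<omega>)) \<partial>M)"
    unfolding loss_d_def
    using dens_class_d_trunc[OF q_dens] AE_cond_density_pos[OF assms(1) _ _ _ cd] int_q
    by (intro INF_lower2) (auto simp: exp_nll_def)
  show "ereal (\<integral>\<omega>. - ln (q (trunc d (R \<omega>)) (Y \<omega>)) \<partial>M) \<le> loss_d M Yset Y R d"
    unfolding loss_d_def
  proof (rule INF_greatest)
    fix g assume g: "g \<in> dens_class_d Yset d"
    then have g_dens: "g \<in> dens_class Yset" by (simp add: dens_class_d_def)
    have g_R: "g (R \<omega>) = g (trunc d (R \<omega>))" for \<omega>
      using dens_class_d_trunc_eq[OF g] by simp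
    show "ereal (\<integral>\<omega>. - ln (q (trunc d (R \<omega>)) (Y \<omega>)) \<partial>M) \<le> exp_nll M Y R g"
      using nll_cond_density_le[OF assms(1) _ _ _ cd g_dens _ int_q]
      by (auto simp: exp_nll_def g_R)
  qed
qed

lemma sigma_finite_subalgebra_gen_alg:
  assumes "prob_space M" and "V \<in> borel_measurable M"
  shows "sigma_finite_subalgebra M (gen_alg M V)"
proof (rule finite_measure_subalgebra_is_sigma_finite)
  interpret prob_space M by fact
  show "finite_measure_subalgebra M (gen_alg M V)"
    by unfold_locales
       (simp add: subalgebra_def gen_alg_def sets_image_in_sets[OF refl assms(2)])
qed

lemma sets_gen_alg: "sets (gen_alg M V) = {V -` A \<inter> space M | A. A \<in> sets borel}"
  unfolding gen_alg_def by (rule sets_vimage_algebra2) simp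

lemma measurable_gen_alg_comp:
  assumes "f \<in> borel_measurable borel"
  shows "(\<lambda>\<omega>. f (V \<omega>)) \<in> borel_measurable (gen_alg M V)"
proof -
  have "V \<in> measurable (gen_alg M V) borel"
    unfolding gen_alg_def by (rule measurable_vimage_algebra1) simp
  from measurable_compose[OF this assms] show ?thesis .
qed

lemma indicator_gen_alg_comp:
  assumes "v \<in> borel_measurable borel" "G \<in> sets (gen_alg M (\<lambda>\<omega>. v (X \<omega>)))"
  obtains E where "E \<in> sets borel" "\<And>\<omega>. \<omega> \<in> space M \<Longrightarrow> indicator G \<omega> = (indicator E (X \<omega>) :: real)"
proof -
  obtain E' where "E' \<in> sets borel" "G = (\<lambda>\<omega>. v (X \<omega>)) -` E' \<inter> space M"
    using assms(2) unfolding sets_gen_alg by blast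
  moreover have "v -` E' \<in> sets borel" using measurable_sets[OF assms(1) \<open>E' \<in> sets borel\<close>] by simp
  ultimately show ?thesis using that[of "v -` E'"] by (auto simp: indicator_def)
qed

lemma integral_cond_indep:
  fixes X :: "'a \<Rightarrow> 'c::topological_space" and Y :: "'a \<Rightarrow> 'b::topological_space"
    and V :: "'a \<Rightarrow> 'd::topological_space"
  assumes "prob_space M"
    and [measurable]: "X \<in> borel_measurable M" "Y \<in> borel_measurable M" "V \<in> borel_measurable M"
    and ci: "cond_indep M Y X V" and [measurable]: "A \<in> sets borel" "C \<in> sets borel"
  shows "(\<integral>\<omega>. indicator A (Y \<omega>) * indicator C (X \<omega>) \<partial>M)
       = (\<integral>\<omega>. real_cond_exp M (gen_alg M V) (\<lambda>\<omega>. indicator A (Y \<omega>)) \<omega> * indicator C (X \<omega>) \<partial>M)"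
proof -
  interpret prob_space M by fact
  interpret F: sigma_finite_subalgebra M "gen_alg M V"
    by (rule sigma_finite_subalgebra_gen_alg) (use assms in auto)
  let ?E = "real_cond_exp M (gen_alg M V)"
  have int_A: "integrable M (\<lambda>\<omega>. indicator A (Y \<omega>) :: real)"
    and int_AC: "integrable M (\<lambda>\<omega>. indicator A (Y \<omega>) * indicator C (X \<omega>) :: real)"
    by (auto intro!: integrable_const_bound[of _ 1] simp: indicator_def)
  have "(\<integral>\<omega>. indicator A (Y \<omega>) * indicator C (X \<omega>) \<partial>M)
      = (\<integral>\<omega>. ?E (\<lambda>\<omega>. indicator A (Y \<omega>) * indicator C (X \<omega>)) \<omega> \<partial>M)"
    using F.real_cond_exp_int(2)[OF int_AC] by simp
  also have "\<dots> = (\<integral>\<omega>. ?E (\<lambda>\<omega>. indicator A (Y \<omega>)) \<omega> * ?E (\<lambda>\<omega>. indicator C (X \<omega>)) \<omega> \<partial>M)"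
    using ci unfolding cond_indep_def by (intro integral_cong_AE) auto
  also have "\<dots> = (\<integral>\<omega>. ?E (\<lambda>\<omega>. indicator A (Y \<omega>)) \<omega> * indicator C (X \<omega>) \<partial>M)"
  proof (rule F.real_cond_exp_intg(2))
    show "integrable M (\<lambda>\<omega>. ?E (\<lambda>\<omega>. indicator A (Y \<omega>)) \<omega> * indicator C (X \<omega>))"
      by (rule Bochner_Integration.integrable_bound[OF F.real_cond_exp_int(1)[OF int_A]])
         (auto simp: indicator_def)
  qed auto
  finally show ?thesis .
qed

lemma AE_real_cond_exp_indicator_mult:
  fixes X :: "'a \<Rightarrow> 'c::topological_space" and Y :: "'a \<Rightarrow> 'b::topological_space"
    and v :: "'c \<Rightarrow> 'd::topological_space" and m :: "'a \<Rightarrow> real"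
  assumes "prob_space M" and [measurable]: "X \<in> borel_measurable M" "Y \<in> borel_measurable M"
    and [measurable]: "v \<in> borel_measurable borel"
    and m_meas[measurable]: "m \<in> borel_measurable (gen_alg M (\<lambda>\<omega>. v (X \<omega>)))"
    and m_bounds: "\<And>\<omega>. 0 \<le> m \<omega> \<and> m \<omega> \<le> 1"
    and m_cond: "\<And>C. C \<in> sets borel \<Longrightarrow>
       (\<integral>\<omega>. indicator A (Y \<omega>) * indicator C (X \<omega>) \<partial>M) = (\<integral>\<omega>. m \<omega> * indicator C (X \<omega>) \<partial>M)"
    and [measurable]: "A \<in> sets borel" "B \<in> sets borel"
  shows "AE \<omega> in M. real_cond_exp M (gen_alg M (\<lambda>\<omega>. v (X \<omega>))) (\<lambda>\<omega>. indicator A (Y \<omega>) * indicator B (X \<omega>)) \<omega>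
           = m \<omega> * real_cond_exp M (gen_alg M (\<lambda>\<omega>. v (X \<omega>))) (\<lambda>\<omega>. indicator B (X \<omega>)) \<omega>"
proof -
  interpret prob_space M by fact
  let ?F = "gen_alg M (\<lambda>\<omega>. v (X \<omega>))"
  let ?E = "real_cond_exp M ?F"
  interpret F: sigma_finite_subalgebra M ?F
    by (rule sigma_finite_subalgebra_gen_alg) (use assms in auto)
  have [measurable]: "m \<in> borel_measurable M" by (rule measurable_from_subalg[OF F.subalg m_meas])
  have int_m: "integrable M m" by (rule integrable_const_bound[of _ 1]) (use m_bounds in auto)
  have int_B: "integrable M (\<lambda>\<omega>. indicator B (X \<omega>) :: real)"
    by (rule integrable_const_bound[of _ 1]) (auto simp: indicator_def)
  show ?thesis
  proof (rule F.real_cond_exp_charact)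
    fix G assume G: "G \<in> sets ?F"
    then obtain E where [measurable]: "E \<in> sets borel"
      and E: "\<And>\<omega>. \<omega> \<in> space M \<Longrightarrow> indicator G \<omega> = (indicator E (X \<omega>) :: real)"
      by (rule indicator_gen_alg_comp[rotated]) measurable
    have [measurable]: "G \<in> sets M" using G F.subalg by (auto simp: subalgebra_def)
    have "(\<integral>\<omega>\<in>G. indicator A (Y \<omega>) * indicator B (X \<omega>) \<partial>M)
        = (\<integral>\<omega>. indicator A (Y \<omega>) * indicator (E \<inter> B) (X \<omega>) \<partial>M :: real)"
      unfolding set_lebesgue_integral_def
      by (rule Bochner_Integration.integral_cong)
         (simp_all add: E indicator_inter_arith mult.commute mult.left_commute)
    also have "\<dots> = (\<integral>\<omega>. (indicator G \<omega> * m \<omega>) * indicator B (X \<omega>) \<partial>M)"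
      by (subst m_cond) (auto intro!: Bochner_Integration.integral_cong simp: E indicator_inter_arith)
    also have "\<dots> = (\<integral>\<omega>. (indicator G \<omega> * m \<omega>) * ?E (\<lambda>\<omega>. indicator B (X \<omega>)) \<omega> \<partial>M)"
    proof (rule F.real_cond_exp_intg(2)[symmetric])
      show "integrable M (\<lambda>\<omega>. (indicator G \<omega> * m \<omega>) * indicator B (X \<omega>))"
        using m_bounds by (intro Bochner_Integration.integrable_bound[OF int_m])
          (auto split: split_indicator)
    qed (use G in measurable)
    also have "\<dots> = (\<integral>\<omega>\<in>G. m \<omega> * ?E (\<lambda>\<omega>. indicator B (X \<omega>)) \<omega> \<partial>M)"
      unfolding set_lebesgue_integral_def by (simp add: ac_simps)
    finally show "(\<integral>\<omega>\<in>G. indicator A (Y \<omega>) * indicator B (X \<omega>) \<partial>M)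
        = (\<integral>\<omega>\<in>G. m \<omega> * ?E (\<lambda>\<omega>. indicator B (X \<omega>)) \<omega> \<partial>M)" .
  next
    have "\<bar>m \<omega> * ?E (\<lambda>\<omega>. indicator B (X \<omega>)) \<omega>\<bar> \<le> \<bar>?E (\<lambda>\<omega>. indicator B (X \<omega>)) \<omega>\<bar>" for \<omega>
      using m_bounds[of \<omega>] by (simp add: abs_mult mult_left_le_one_le)
    then show "integrable M (\<lambda>\<omega>. m \<omega> * ?E (\<lambda>\<omega>. indicator B (X \<omega>)) \<omega>)"
      by (intro Bochner_Integration.integrable_bound[OF F.real_cond_exp_int(1)[OF int_B]]) auto
  qed (auto intro!: integrable_const_bound[of _ 1] simp: indicator_def)
qed

lemma cond_indepI_cond_prob:
  fixes X :: "'a \<Rightarrow> 'c::topological_space" and Y :: "'a \<Rightarrow> 'b::topological_space"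
    and v :: "'c \<Rightarrow> 'd::topological_space"
  assumes "prob_space M" and [measurable]: "X \<in> borel_measurable M" "Y \<in> borel_measurable M"
    and [measurable]: "v \<in> borel_measurable borel"
    and cond_prob: "\<And>A. A \<in> sets borel \<Longrightarrow> \<exists>m::'a \<Rightarrow> real. m \<in> borel_measurable (gen_alg M (\<lambda>\<omega>. v (X \<omega>)))
        \<and> (\<forall>\<omega>. 0 \<le> m \<omega> \<and> m \<omega> \<le> 1)
        \<and> (\<forall>C\<in>sets borel. (\<integral>\<omega>. indicator A (Y \<omega>) * indicator C (X \<omega>) \<partial>M) = (\<integral>\<omega>. m \<omega> * indicator C (X \<omega>) \<partial>M))"
  shows "cond_indep M Y X (\<lambda>\<omega>. v (X \<omega>))"
  unfolding cond_indep_def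
proof (intro ballI)
  interpret prob_space M by fact
  let ?F = "gen_alg M (\<lambda>\<omega>. v (X \<omega>))"
  interpret F: sigma_finite_subalgebra M ?F
    by (rule sigma_finite_subalgebra_gen_alg) (use assms in auto)
  fix A :: "'b set" and B :: "'c set" assume [measurable]: "A \<in> sets borel" "B \<in> sets borel"
  obtain m :: "'a \<Rightarrow> real" where m: "m \<in> borel_measurable ?F" "\<And>\<omega>. 0 \<le> m \<omega> \<and> m \<omega> \<le> 1"
    "\<And>C. C \<in> sets borel \<Longrightarrow>
       (\<integral>\<omega>. indicator A (Y \<omega>) * indicator C (X \<omega>) \<partial>M) = (\<integral>\<omega>. m \<omega> * indicator C (X \<omega>) \<partial>M)"
    using cond_prob[of A] \<open>A \<in> sets borel\<close> by blast
  have mult: "AE \<omega> in M. real_cond_exp M ?F (\<lambda>\<omega>. indicator A (Y \<omega>) * indicator B' (X \<omega>)) \<omega>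
      = m \<omega> * real_cond_exp M ?F (\<lambda>\<omega>. indicator B' (X \<omega>)) \<omega>" if "B' \<in> sets borel" for B'
    by (rule AE_real_cond_exp_indicator_mult[OF assms(1-4)]) (use m that in simp_all)
  have "AE \<omega> in M. real_cond_exp M ?F (\<lambda>\<omega>. 1) \<omega> = 1"
    by (rule F.real_cond_exp_F_meas) auto
  with mult[OF sets.top] have "AE \<omega> in M. real_cond_exp M ?F (\<lambda>\<omega>. indicator A (Y \<omega>)) \<omega> = m \<omega>"
    by eventually_elim simp
  with mult[OF \<open>B \<in> sets borel\<close>] show "AE \<omega> in M.
      real_cond_exp M ?F (\<lambda>\<omega>. indicator A (Y \<omega>) * indicator B (X \<omega>)) \<omega>
      = real_cond_exp M ?F (\<lambda>\<omega>. indicator A (Y \<omega>)) \<omega> * real_cond_exp M ?F (\<lambda>\<omega>. indicator B (X \<omega>)) \<omega>"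
    by eventually_elim simp
qed

lemma AE_real_cond_exp_cond_density:
  fixes V :: "'a \<Rightarrow> 'c::topological_space" and R :: "'a \<Rightarrow> nat \<Rightarrow> real"
  assumes "prob_space M" and [measurable]: "V \<in> borel_measurable M" "Y \<in> borel_measurable M"
    and [measurable]: "Yset \<in> sets borel" "f \<in> borel_measurable borel" "K \<in> borel_measurable borel"
    and R_eq: "\<And>\<omega>. R \<omega> = f (V \<omega>)" and V_eq: "\<And>\<omega>. V \<omega> = K (R \<omega>)"
    and cd: "is_cond_density M Yset Y R p" and [measurable]: "A \<in> sets borel"
  shows "AE \<omega> in M. real_cond_exp M (gen_alg M V) (\<lambda>\<omega>. indicator A (Y \<omega>)) \<omega> = dens_prob p Yset A (R \<omega>)"
proof -
  interpret prob_space M by fact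
  interpret F: sigma_finite_subalgebra M "gen_alg M V"
    by (rule sigma_finite_subalgebra_gen_alg) (use assms in auto)
  have p_dens: "p \<in> dens_class Yset" using cd by (simp add: is_cond_density_def)
  note [measurable] = borel_measurable_dens_prob[OF p_dens]
  have [measurable]: "R \<in> borel_measurable M" unfolding R_eq[abs_def] by measurable
  have V_fun: "V = (\<lambda>\<omega>. K (R \<omega>))" using V_eq by auto
  show ?thesis
  proof (rule F.real_cond_exp_charact)
    fix G assume "G \<in> sets (gen_alg M V)"
    then obtain E where [measurable]: "E \<in> sets borel"
      and E: "\<And>\<omega>. \<omega> \<in> space M \<Longrightarrow> indicator G \<omega> = (indicator E (R \<omega>) :: real)"
      using indicator_gen_alg_comp[of K G M R] unfolding V_fun by auto
    have "(\<integral>\<omega>\<in>G. indicator A (Y \<omega>) \<partial>M) = (\<integral>\<omega>. indicator E (R \<omega>) * indicator A (Y \<omega>) \<partial>M :: real)"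
      unfolding set_lebesgue_integral_def by (rule Bochner_Integration.integral_cong) (simp_all add: E)
    also have "\<dots> = (\<integral>\<omega>. indicator E (R \<omega>) * dens_prob p Yset A (R \<omega>) \<partial>M)"
      by (rule integral_indicator_cond_density[OF assms(1) _ _ _ cd]) measurable
    also have "\<dots> = (\<integral>\<omega>\<in>G. dens_prob p Yset A (R \<omega>) \<partial>M)"
      unfolding set_lebesgue_integral_def by (rule Bochner_Integration.integral_cong) (simp_all add: E)
    finally show "(\<integral>\<omega>\<in>G. indicator A (Y \<omega>) \<partial>M) = (\<integral>\<omega>\<in>G. dens_prob p Yset A (R \<omega>) \<partial>M)" .
  next
    have "(\<lambda>\<omega>. dens_prob p Yset A (f (V \<omega>))) \<in> borel_measurable (gen_alg M V)"
      by (rule measurable_gen_alg_comp) measurable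
    then show "(\<lambda>\<omega>. dens_prob p Yset A (R \<omega>)) \<in> borel_measurable (gen_alg M V)"
      by (simp add: R_eq)
  qed (auto intro!: integrable_const_bound[of _ 1] simp: indicator_def dens_prob_le_1[OF p_dens])
qed

lemma AE_real_cond_exp_oproj_span:
  fixes X :: "'a \<Rightarrow> real^'p" and B :: "nat \<Rightarrow> real^'p"
  assumes "prob_space M" and [measurable]: "X \<in> borel_measurable M" "Y \<in> borel_measurable M"
    and [measurable]: "Yset \<in> sets borel"
    and basis: "inj_on B {..<n}" "independent (B ` {..<n})"
    and cd: "is_cond_density M Yset Y (\<lambda>\<omega>. coords B n (X \<omega>)) p" and "A \<in> sets borel"
  shows "AE \<omega> in M. real_cond_exp M (gen_alg M (\<lambda>\<omega>. oproj (span (B ` {..<n})) (X \<omega>)))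
           (\<lambda>\<omega>. indicator A (Y \<omega>)) \<omega> = dens_prob p Yset A (coords B n (X \<omega>))"
proof -
  let ?S = "span (B ` {..<n})"
  note [measurable] = borel_measurable_oproj[of ?S, simplified]
  obtain K where "K \<in> borel_measurable borel" and K: "\<And>x. K (coords B n x) = oproj ?S x"
    using oproj_span_coords[OF basis] by blast
  have "coords B n (oproj ?S x) = coords B n x" for x
    by (rule coords_oproj) (auto intro: span_base)
  with K show ?thesis
    by (intro AE_real_cond_exp_cond_density[OF assms(1) _ _ _ borel_measurable_coords[of B n]
          \<open>K \<in> borel_measurable borel\<close> _ _ cd \<open>A \<in> sets borel\<close>]) simp_all
qed

lemma dim_red_subspaceI_cond_prob:
  fixes X :: "'a \<Rightarrow> real^'p"
  assumes "prob_space M" and [measurable]: "X \<in> borel_measurable M" "Y \<in> borel_measurable M"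
    and drs: "dim_red_subspace M X Y S" and "subspace T"
    and cond_prob: "\<And>A. A \<in> sets borel \<Longrightarrow> \<exists>m::'a \<Rightarrow> real.
        m \<in> borel_measurable (gen_alg M (\<lambda>\<omega>. oproj T (X \<omega>))) \<and> (\<forall>\<omega>. 0 \<le> m \<omega> \<and> m \<omega> \<le> 1)
        \<and> (AE \<omega> in M. real_cond_exp M (gen_alg M (\<lambda>\<omega>. oproj S (X \<omega>))) (\<lambda>\<omega>. indicator A (Y \<omega>)) \<omega> = m \<omega>)"
  shows "dim_red_subspace M X Y T"
proof -
  have [measurable]: "oproj S \<in> borel_measurable borel" "oproj T \<in> borel_measurable borel"
    using drs \<open>subspace T\<close> by (simp_all add: borel_measurable_oproj dim_red_subspace_def)
  have "cond_indep M Y X (\<lambda>\<omega>. oproj T (X \<omega>))"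
  proof (rule cond_indepI_cond_prob[OF assms(1-3)])
    fix A :: "real set" assume [measurable]: "A \<in> sets borel"
    obtain m :: "'a \<Rightarrow> real" where m: "m \<in> borel_measurable (gen_alg M (\<lambda>\<omega>. oproj T (X \<omega>)))"
      "\<forall>\<omega>. 0 \<le> m \<omega> \<and> m \<omega> \<le> 1"
      and AE_m: "AE \<omega> in M. real_cond_exp M (gen_alg M (\<lambda>\<omega>. oproj S (X \<omega>))) (\<lambda>\<omega>. indicator A (Y \<omega>)) \<omega> = m \<omega>"
      using cond_prob[of A] by auto
    interpret F: sigma_finite_subalgebra M "gen_alg M (\<lambda>\<omega>. oproj T (X \<omega>))"
      by (rule sigma_finite_subalgebra_gen_alg[OF assms(1)]) measurable
    have [measurable]: "m \<in> borel_measurable M" by (rule measurable_from_subalg[OF F.subalg m(1)])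
    have "(\<integral>\<omega>. indicator A (Y \<omega>) * indicator C (X \<omega>) \<partial>M) = (\<integral>\<omega>. m \<omega> * indicator C (X \<omega>) \<partial>M)"
      if [measurable]: "C \<in> sets borel" for C
    proof -
      have "(\<integral>\<omega>. indicator A (Y \<omega>) * indicator C (X \<omega>) \<partial>M)
          = (\<integral>\<omega>. real_cond_exp M (gen_alg M (\<lambda>\<omega>. oproj S (X \<omega>))) (\<lambda>\<omega>. indicator A (Y \<omega>)) \<omega>
               * indicator C (X \<omega>) \<partial>M)"
        using drs by (intro integral_cond_indep[OF assms(1)]) (simp_all add: dim_red_subspace_def)
      also have "\<dots> = (\<integral>\<omega>. m \<omega> * indicator C (X \<omega>) \<partial>M)"
        using AE_m by (intro integral_cong_AE) (measurable, auto elim: eventually_mono)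
      finally show ?thesis .
    qed
    with m show "\<exists>m::'a \<Rightarrow> real. m \<in> borel_measurable (gen_alg M (\<lambda>\<omega>. oproj T (X \<omega>)))
        \<and> (\<forall>\<omega>. 0 \<le> m \<omega> \<and> m \<omega> \<le> 1)
        \<and> (\<forall>C\<in>sets borel. (\<integral>\<omega>. indicator A (Y \<omega>) * indicator C (X \<omega>) \<partial>M) = (\<integral>\<omega>. m \<omega> * indicator C (X \<omega>) \<partial>M))"
      by blast
  qed measurable
  with \<open>subspace T\<close> show ?thesis by (simp add: dim_red_subspace_def)
qed

lemma dim_red_subspace_span_prefix:
  fixes X :: "'a \<Rightarrow> real^'p" and B :: "nat \<Rightarrow> real^'p"
  assumes "prob_space M" and [measurable]: "X \<in> borel_measurable M" "Y \<in> borel_measurable M"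
    and [measurable]: "Yset \<in> sets borel"
    and drs: "dim_red_subspace M X Y (span (B ` {..<n}))"
    and basis: "inj_on B {..<n}" "independent (B ` {..<n})"
    and cd: "is_cond_density M Yset Y (\<lambda>\<omega>. coords B n (X \<omega>)) p"
    and q: "q \<in> dens_class Yset"
    and eq: "AE \<omega> in M. \<forall>A. dens_prob p Yset A (coords B n (X \<omega>)) = dens_prob q Yset A (coords B d (X \<omega>))"
  shows "dim_red_subspace M X Y (span (B ` {..<d}))"
proof (rule dim_red_subspaceI_cond_prob[OF assms(1-3) drs subspace_span])
  let ?T = "span (B ` {..<d})"
  fix A :: "real set" assume [measurable]: "A \<in> sets borel"
  note [measurable] = borel_measurable_coords borel_measurable_oproj[of ?T, simplified]
    borel_measurable_dens_prob[OF q]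
  have "coords B d (oproj ?T x) = coords B d x" for x
    by (rule coords_oproj) (auto intro: span_base)
  moreover have "(\<lambda>\<omega>. dens_prob q Yset A (coords B d (oproj ?T (X \<omega>))))
      \<in> borel_measurable (gen_alg M (\<lambda>\<omega>. oproj ?T (X \<omega>)))"
    by (rule measurable_gen_alg_comp) measurable
  moreover have "AE \<omega> in M. real_cond_exp M (gen_alg M (\<lambda>\<omega>. oproj (span (B ` {..<n})) (X \<omega>)))
      (\<lambda>\<omega>. indicator A (Y \<omega>)) \<omega> = dens_prob q Yset A (coords B d (X \<omega>))"
    using AE_real_cond_exp_oproj_span[OF assms(1-4) basis cd \<open>A \<in> sets borel\<close>] eq
    by eventually_elim simp
  ultimately show "\<exists>m::'a \<Rightarrow> real. m \<in> borel_measurable (gen_alg M (\<lambda>\<omega>. oproj ?T (X \<omega>)))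
      \<and> (\<forall>\<omega>. 0 \<le> m \<omega> \<and> m \<omega> \<le> 1)
      \<and> (AE \<omega> in M. real_cond_exp M (gen_alg M (\<lambda>\<omega>. oproj (span (B ` {..<n})) (X \<omega>)))
           (\<lambda>\<omega>. indicator A (Y \<omega>)) \<omega> = m \<omega>)"
    by (intro exI[of _ "\<lambda>\<omega>. dens_prob q Yset A (coords B d (X \<omega>))"])
       (simp add: dens_prob_le_1[OF q])
qed

lemma dim_central_subspace_le:
  assumes "dim_red_subspace M X Y (span (B ` {..<d}))"
  shows "dim (central_subspace M X Y) \<le> d"
proof -
  have "dim (central_subspace M X Y) \<le> dim (span (B ` {..<d}))"
    using assms by (intro dim_subset) (auto simp: central_subspace_def)
  also have "\<dots> \<le> card (B ` {..<d})" by (simp add: dim_span dim_le_card')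
  also have "\<dots> \<le> d" using card_image_le[of "{..<d}" B] by simp
  finally show ?thesis .
qed

lemma AE_dens_prob_trunc_of_loss_d_eq:
  fixes R :: "'a \<Rightarrow> nat \<Rightarrow> real"
  assumes "prob_space M" and [measurable]: "R \<in> borel_measurable M" "Y \<in> borel_measurable M"
    and [measurable]: "Yset \<in> sets borel"
    and R_fixed: "\<And>\<omega>. trunc n (R \<omega>) = R \<omega>"
    and cd_p: "is_cond_density M Yset Y R p"
    and int_p: "integrable M (\<lambda>\<omega>. - ln (p (R \<omega>) (Y \<omega>)))"
    and cd_q: "is_cond_density M Yset Y (\<lambda>\<omega>. trunc d (R \<omega>)) q"
    and int_q: "integrable M (\<lambda>\<omega>. - ln (q (trunc d (R \<omega>)) (Y \<omega>)))"
    and loss_eq: "loss_d M Yset Y R d = loss_d M Yset Y R n"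
  shows "AE \<omega> in M. \<forall>A. dens_prob p Yset A (R \<omega>) = dens_prob q Yset A (trunc d (R \<omega>))"
proof -
  have [measurable]: "(\<lambda>\<omega>. trunc d (R \<omega>)) \<in> borel_measurable M"
    using borel_measurable_trunc by measurable
  have q_dens: "q \<in> dens_class Yset" using cd_q by (simp add: is_cond_density_def)
  have "loss_d M Yset Y R n = ereal (\<integral>\<omega>. - ln (p (trunc n (R \<omega>)) (Y \<omega>)) \<partial>M)"
    using cd_p int_p by (intro loss_d_eq_nll_cond_density[OF assms(1-4)]) (simp_all add: R_fixed)
  moreover have "loss_d M Yset Y R d = ereal (\<integral>\<omega>. - ln (q (trunc d (R \<omega>)) (Y \<omega>)) \<partial>M)"
    by (rule loss_d_eq_nll_cond_density[OF assms(1-4) cd_q int_q])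
  ultimately have nll_eq: "(\<integral>\<omega>. - ln (q (trunc d (R \<omega>)) (Y \<omega>)) \<partial>M) = (\<integral>\<omega>. - ln (p (R \<omega>) (Y \<omega>)) \<partial>M)"
    using loss_eq by (simp add: R_fixed)
  have "AE \<omega> in M. \<forall>A. dens_prob p Yset A (R \<omega>) = dens_prob (\<lambda>r. q (trunc d r)) Yset A (R \<omega>)"
    using dens_class_d_trunc[OF q_dens, of d] int_q nll_eq
      AE_cond_density_pos[OF assms(1) _ assms(3,4) cd_q]
    by (intro AE_dens_prob_eq_of_nll_le[OF assms(1-4) cd_p _ _ int_p]) (simp_all add: dens_class_d_def)
  then show ?thesis by (simp add: dens_prob_def)
qed

lemma dim_red_subspace_of_loss_d_eq:
  fixes X :: "'a \<Rightarrow> real^'p" and B :: "nat \<Rightarrow> real^'p"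
  assumes "prob_space M" and [measurable]: "X \<in> borel_measurable M" "Y \<in> borel_measurable M"
    and [measurable]: "Yset \<in> sets borel"
    and drs: "dim_red_subspace M X Y (span (B ` {..<n}))"
    and basis: "inj_on B {..<n}" "independent (B ` {..<n})"
    and cond_density: "\<And>d. \<exists>q. is_cond_density M Yset Y (\<lambda>\<omega>. coords B d (X \<omega>)) q
      \<and> integrable M (\<lambda>\<omega>. - ln (q (coords B d (X \<omega>)) (Y \<omega>)))"
    and "d \<le> n"
    and loss_eq: "loss_d M Yset Y (\<lambda>\<omega>. coords B n (X \<omega>)) d = loss_d M Yset Y (\<lambda>\<omega>. coords B n (X \<omega>)) n"
  shows "dim_red_subspace M X Y (span (B ` {..<d}))"
proof -
  note [measurable] = borel_measurable_coords
  obtain p q where p: "is_cond_density M Yset Y (\<lambda>\<omega>. coords B n (X \<omega>)) p"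
      "integrable M (\<lambda>\<omega>. - ln (p (coords B n (X \<omega>)) (Y \<omega>)))"
    and q: "is_cond_density M Yset Y (\<lambda>\<omega>. trunc d (coords B n (X \<omega>))) q"
      "integrable M (\<lambda>\<omega>. - ln (q (trunc d (coords B n (X \<omega>))) (Y \<omega>)))"
    using cond_density[of n] cond_density[of d] \<open>d \<le> n\<close> by (auto simp: trunc_coords)
  have q_dens: "q \<in> dens_class Yset" using q(1) by (simp add: is_cond_density_def)
  have "AE \<omega> in M. \<forall>A. dens_prob p Yset A (coords B n (X \<omega>))
      = dens_prob q Yset A (trunc d (coords B n (X \<omega>)))"
    by (rule AE_dens_prob_trunc_of_loss_d_eq[OF assms(1) _ assms(3,4) _ p q loss_eq])
       (simp_all add: trunc_coords)
  then have "AE \<omega> in M. \<forall>A. dens_prob p Yset A (coords B n (X \<omega>)) = dens_prob q Yset A (coords B d (X \<omega>))"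
    using \<open>d \<le> n\<close> by (simp add: trunc_coords)
  with q_dens show ?thesis
    by (rule dim_red_subspace_span_prefix[OF assms(1-4) drs basis p(1)])
qed

theorem propositionB4:
  fixes M :: "'a measure" and X :: "'a \<Rightarrow> real^'p" and Y :: "'a \<Rightarrow> real"
    and Yset :: "real set" and dmax :: nat and B :: "nat \<Rightarrow> real^'p"
    and R :: "'a \<Rightarrow> nat \<Rightarrow> real"
  assumes "prob_space M"
    and "X \<in> borel_measurable M" and "Y \<in> borel_measurable M"
    and "Yset \<in> sets borel" and "\<forall>\<omega> \<in> space M. Y \<omega> \<in> Yset"
    and dens_exist: "\<forall>h :: real^'p \<Rightarrow> (nat \<Rightarrow> real). h \<in> borel_measurable borel \<longrightarrow>
                      (\<exists>g. is_cond_density M Yset Y (\<lambda>\<omega>. h (X \<omega>)) g)"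
    and nll_finite: "\<forall>(h :: real^'p \<Rightarrow> (nat \<Rightarrow> real)) g. h \<in> borel_measurable borel \<longrightarrow>
                      is_cond_density M Yset Y (\<lambda>\<omega>. h (X \<omega>)) g \<longrightarrow>
                      integrable M (\<lambda>\<omega>. - ln (g (h (X \<omega>)) (Y \<omega>)))"
    and CS_drs: "dim_red_subspace M X Y (central_subspace M X Y)"
    and basis: "inj_on B {..<dim (central_subspace M X Y)}"
               "independent (B ` {..<dim (central_subspace M X Y)})"
               "span (B ` {..<dim (central_subspace M X Y)}) = central_subspace M X Y"
    and dmax: "dim (central_subspace M X Y) \<le> dmax"
    and R_def: "\<forall>\<omega> i. R \<omega> i = (if i < dim (central_subspace M X Y) then inner (B i) (X \<omega>) else 0)"
  shows "d_star M Yset Y R dmax = dim (central_subspace M X Y)"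
proof -
  define n where "n = dim (central_subspace M X Y)"
  have R_eq: "R = (\<lambda>\<omega>. coords B n (X \<omega>))" using R_def by (auto simp: coords_def n_def)
  have drs: "dim_red_subspace M X Y (span (B ` {..<n}))" using CS_drs basis(3) by (simp add: n_def)
  have cond_density: "\<exists>q. is_cond_density M Yset Y (\<lambda>\<omega>. coords B d (X \<omega>)) q
      \<and> integrable M (\<lambda>\<omega>. - ln (q (coords B d (X \<omega>)) (Y \<omega>)))" for d
    using dens_exist nll_finite borel_measurable_coords by blast
  have "loss_d M Yset Y R d \<noteq> loss_d M Yset Y R n" if "d < n" for d
  proof
    assume "loss_d M Yset Y R d = loss_d M Yset Y R n"
    then have "dim_red_subspace M X Y (span (B ` {..<d}))"
      using \<open>d < n\<close> unfolding R_eq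
      by (intro dim_red_subspace_of_loss_d_eq[OF assms(1-4) drs basis(1,2)[folded n_def] cond_density]) simp_all
    then show False using dim_central_subspace_le \<open>d < n\<close> n_def by fastforce
  qed
  moreover have "loss_d M Yset Y R dmax = loss_d M Yset Y R n"
    using dmax by (intro loss_d_eq_of_trunc_fixed) (simp_all add: n_def R_eq trunc_coords)
  ultimately show ?thesis
    unfolding d_star_def n_def[symmetric] using dmax n_def
    by (intro Least_equality) (auto, metis not_le)
qed

end
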